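(* Let $n\ge1$, let $\mu,\nu\in\mathbb{R}^n$ be probability vectors, let $\gamma>0$, and let $\phi$ satisfy the Bregman assumption in the context with $\phi'_0$ finite. Let $\hat C\in\mathbb{R}^{n\times n}$ and $\hat X:=\mathcal{F}(\hat C)$. If $\hat X_{ij}=0$ for some $1\le i,j\le n$, then for every $\lambda>0$, $$\mathcal{F}(\hat C)=\hat X=\mathcal{F}(\hat C+\lambda E^{(i,j)}),$$ where $E^{(i,j)}$ is the $n\times n$ matrix with $1$ in entry $(i,j)$ and zeros elsewhere.
   Context: Probability vectors have nonnegative entries summing to $1$. $\mathcal{U}(\mu,\nu):=\{X\in\mathbb{R}_+^{n\times n}: X\mathbf{1}=\mu,\ X^\top\mathbf{1}=\nu\}$. Bregman assumption on $\phi:\mathbb{R}\to(-\infty,+\infty]$: $I=\operatorname{dom}\phi$ is an interval with $(0,1)\subseteq\operatorname{int}(I)$; $\phi$ is of Legendre type (proper, closed, strictly convex on $\operatorname{int}(\operatorname{dom}\phi)$, essentially smooth); $\phi$ is $C^1$ on $\operatorname{int}(I)$. $\phi(X):=\sum_{i,j}\phi(X_{ij})$. $\mathcal{F}(C):=\arg\min_{X\in\mathcal{U}(\mu,\nu)}\{\langle C,X\rangle+\gamma\phi(X)\}$ (the unique minimizer). $\phi'_0:=\lim_{x\to0^+}\phi'(x)\in[-\infty,\infty)$. *)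

theory Defs
  imports "HOL-Analysis.Analysis"
begin

text \<open>A convex function phi : R -> (-infinity,+infinity] is modelled as
  phi :: real => ereal with phi x ~= -infinity everywhere.\<close>

definition edom :: "(real \<Rightarrow> ereal) \<Rightarrow> real set" where
  "edom \<phi> = {x. \<phi> x < \<infinity>}"

definition phir :: "(real \<Rightarrow> ereal) \<Rightarrow> real \<Rightarrow> real" where
  "phir \<phi> x = real_of_ereal (\<phi> x)"

definition strictly_convex_on :: "real set \<Rightarrow> (real \<Rightarrow> real) \<Rightarrow> bool" where
  "strictly_convex_on S f \<longleftrightarrow> convex S \<and>
     (\<forall>x\<in>S. \<forall>y\<in>S. \<forall>t. x \<noteq> y \<and> 0 < t \<and> t < 1 \<longrightarrow>
        f ((1 - t) * x + t * y) < (1 - t) * f x + t * f y)"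

definition proper_fun :: "(real \<Rightarrow> ereal) \<Rightarrow> bool" where
  "proper_fun \<phi> \<longleftrightarrow> (\<forall>x. \<phi> x \<noteq> -\<infinity>) \<and> edom \<phi> \<noteq> {}"

definition closed_fun :: "(real \<Rightarrow> ereal) \<Rightarrow> bool" where
  "closed_fun \<phi> \<longleftrightarrow> closed {(x, t::real). \<phi> x \<le> ereal t}"

definition essentially_smooth :: "(real \<Rightarrow> ereal) \<Rightarrow> bool" where
  "essentially_smooth \<phi> \<longleftrightarrow>
     interior (edom \<phi>) \<noteq> {} \<and>
     (\<forall>x\<in>interior (edom \<phi>). phir \<phi> differentiable (at x)) \<and>
     (\<forall>x\<in>frontier (interior (edom \<phi>)).
        filterlim (\<lambda>y. \<bar>deriv (phir \<phi>) y\<bar>) at_top (at x within interior (edom \<phi>)))"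

definition legendre_type :: "(real \<Rightarrow> ereal) \<Rightarrow> bool" where
  "legendre_type \<phi> \<longleftrightarrow> proper_fun \<phi> \<and> closed_fun \<phi> \<and>
     strictly_convex_on (interior (edom \<phi>)) (phir \<phi>) \<and> essentially_smooth \<phi>"

definition bregman_assumption :: "(real \<Rightarrow> ereal) \<Rightarrow> bool" where
  "bregman_assumption \<phi> \<longleftrightarrow>
     is_interval (edom \<phi>) \<and> {0<..<1} \<subseteq> interior (edom \<phi>) \<and>
     legendre_type \<phi> \<and>
     (\<forall>x\<in>interior (edom \<phi>). phir \<phi> differentiable (at x)) \<and>
     continuous_on (interior (edom \<phi>)) (deriv (phir \<phi>))"

definition prob_vec :: "real ^ 'n \<Rightarrow> bool" where
  "prob_vec v \<longleftrightarrow> (\<forall>i. 0 \<le> v $ i) \<and> (\<Sum>i\<in>UNIV. v $ i) = 1"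

definition transport_polytope :: "real ^ 'n \<Rightarrow> real ^ 'n \<Rightarrow> (real ^ 'n ^ 'n) set" where
  "transport_polytope \<mu> \<nu> = {X. (\<forall>i j. 0 \<le> X $ i $ j) \<and>
      (\<forall>i. (\<Sum>j\<in>UNIV. X $ i $ j) = \<mu> $ i) \<and>
      (\<forall>j. (\<Sum>i\<in>UNIV. X $ i $ j) = \<nu> $ j)}"

definition phi_mat :: "(real \<Rightarrow> ereal) \<Rightarrow> real ^ 'n ^ 'n \<Rightarrow> ereal" where
  "phi_mat \<phi> X = (\<Sum>i\<in>UNIV. \<Sum>j\<in>UNIV. \<phi> (X $ i $ j))"

definition frob :: "real ^ 'n ^ 'n \<Rightarrow> real ^ 'n ^ 'n \<Rightarrow> real" where
  "frob C X = (\<Sum>i\<in>UNIV. \<Sum>j\<in>UNIV. C $ i $ j * X $ i $ j)"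

definition reg_obj :: "real \<Rightarrow> (real \<Rightarrow> ereal) \<Rightarrow> real ^ 'n ^ 'n \<Rightarrow> real ^ 'n ^ 'n \<Rightarrow> ereal" where
  "reg_obj \<gamma> \<phi> C X = ereal (frob C X) + ereal \<gamma> * phi_mat \<phi> X"

definition regOT :: "real ^ 'n \<Rightarrow> real ^ 'n \<Rightarrow> real \<Rightarrow> (real \<Rightarrow> ereal) \<Rightarrow> real ^ 'n ^ 'n \<Rightarrow> real ^ 'n ^ 'n" where
  "regOT \<mu> \<nu> \<gamma> \<phi> C = (THE X. X \<in> transport_polytope \<mu> \<nu> \<and>
      (\<forall>Y\<in>transport_polytope \<mu> \<nu>. reg_obj \<gamma> \<phi> C X \<le> reg_obj \<gamma> \<phi> C Y))"

definition unit_mat :: "'n \<Rightarrow> 'n \<Rightarrow> real ^ 'n ^ 'n" where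
  "unit_mat i j = (\<chi> k l. if k = i \<and> l = j then 1 else 0)"

end

theory Submission imports Defs begin

text \<open>Raising the cost of entry (i,j) by \<lambda> leaves the objective at X = F(C) unchanged,
  because X vanishes there, and does not lower it at any other transport plan, whose entries
  are nonnegative. So X still minimizes the perturbed problem, and it is the minimizer because
  every regularized problem has exactly one: the transport polytope is compact and convex, and
  a finite \<phi>'(0+) puts 0 into the open interval int dom \<phi>, so (unless the polytope is a single
  point) all entries of a plan lie where \<phi> is real-valued, continuous and strictly convex.\<close>

lemma zero_in_interior_edom:
  assumes B: "bregman_assumption \<phi>"
    and L: "\<exists>L::real. (deriv (phir \<phi>) \<longlongrightarrow> L) (at_right 0)"
  shows "0 \<in> interior (edom \<phi>)"
proof (rule ccontr)
  \<comment> \<open>otherwise 0 is a boundary point of the interval int dom \<open>\<phi>\<close>, where \<open>|\<phi>'|\<close> must blow up\<close>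
  let ?D = "interior (edom \<phi>)"
  assume not_in: "0 \<notin> ?D"
  have unit_sub: "{0<..<1} \<subseteq> ?D" using B by (simp add: bregman_assumption_def)
  have "is_interval ?D"
    using B by (simp add: bregman_assumption_def is_interval_convex_1)
  moreover have "1/2 \<in> ?D" using unit_sub by auto
  ultimately have "y \<in> ?D \<Longrightarrow> y \<le> 0 \<Longrightarrow> 0 \<in> ?D" for y
    unfolding is_interval_1 by (meson half_gt_zero_iff less_imp_le zero_less_one)
  then have D_pos: "?D \<subseteq> {0<..}" using not_in by (force simp: not_less[symmetric])
  have limpt: "0 islimpt ?D"
    using islimpt_subset[OF islimpt_greaterThanLessThan1[of "0::real" 1] unit_sub] by simp
  then have "0 \<in> frontier ?D" using not_in by (simp add: frontier_def closure_def)
  then have "filterlim (\<lambda>y. \<bar>deriv (phir \<phi>) y\<bar>) at_top (at 0 within ?D)"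
    using B by (simp add: bregman_assumption_def legendre_type_def essentially_smooth_def)
  moreover obtain L where "(deriv (phir \<phi>) \<longlongrightarrow> L) (at 0 within {0<..})" using L by auto
  then have "((\<lambda>y. \<bar>deriv (phir \<phi>) y\<bar>) \<longlongrightarrow> \<bar>L\<bar>) (at 0 within ?D)"
    using D_pos by (intro tendsto_rabs) (rule tendsto_within_subset)
  moreover have "at 0 within ?D \<noteq> bot" using limpt trivial_limit_within by blast
  ultimately show False
    using not_tendsto_and_filterlim_at_infinity filterlim_at_top_imp_at_infinity by blast
qed

lemma prob_vec_le_1:
  assumes "prob_vec \<mu>" shows "\<mu> $ a \<le> 1"
proof -
  have "\<mu> $ a \<le> (\<Sum>k\<in>UNIV. \<mu> $ k)"
    by (rule member_le_sum) (use assms in \<open>auto simp: prob_vec_def\<close>)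
  then show ?thesis using assms by (simp add: prob_vec_def)
qed

lemma prob_vec_eq_1_other:
  assumes "prob_vec \<mu>" "\<mu> $ a = 1" "k \<noteq> a"
  shows "\<mu> $ k = 0"
proof -
  have "(\<Sum>l\<in>{a,k}. \<mu> $ l) \<le> (\<Sum>l\<in>UNIV. \<mu> $ l)"
    by (rule sum_mono2) (use assms(1) in \<open>auto simp: prob_vec_def\<close>)
  then show ?thesis using assms by (auto simp: prob_vec_def intro: antisym)
qed

lemma transport_entry_nonneg: "X \<in> transport_polytope \<mu> \<nu> \<Longrightarrow> 0 \<le> X $ a $ b"
  by (simp add: transport_polytope_def)

lemma transport_entry_le_row:
  assumes "X \<in> transport_polytope \<mu> \<nu>" shows "X $ a $ b \<le> \<mu> $ a"
proof -
  have "X $ a $ b \<le> (\<Sum>l\<in>UNIV. X $ a $ l)"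
    by (rule member_le_sum) (use assms in \<open>auto simp: transport_polytope_def\<close>)
  then show ?thesis using assms by (simp add: transport_polytope_def)
qed

lemma transport_entry_le_col:
  assumes "X \<in> transport_polytope \<mu> \<nu>" shows "X $ a $ b \<le> \<nu> $ b"
proof -
  have "X $ a $ b \<le> (\<Sum>k\<in>UNIV. X $ k $ b)"
    by (rule member_le_sum) (use assms in \<open>auto simp: transport_polytope_def\<close>)
  then show ?thesis using assms by (simp add: transport_polytope_def)
qed

lemma product_coupling_in_transport_polytope:
  assumes "prob_vec \<mu>" "prob_vec \<nu>"
  shows "(\<chi> a b. \<mu> $ a * \<nu> $ b) \<in> transport_polytope \<mu> \<nu>"
  using assms by (auto simp: transport_polytope_def prob_vec_def
      sum_distrib_left[symmetric] sum_distrib_right[symmetric])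

lemma transport_polytope_point_mass:
  assumes \<mu>: "prob_vec \<mu>" "\<mu> $ a = 1" and \<nu>: "prob_vec \<nu>" "\<nu> $ b = 1"
  shows "transport_polytope \<mu> \<nu> = {unit_mat a b}"
proof -
  have "Z = unit_mat a b" if Z: "Z \<in> transport_polytope \<mu> \<nu>" for Z
  proof -
    have off: "Z $ k $ l = 0" if "\<not> (k = a \<and> l = b)" for k l
      using that prob_vec_eq_1_other[OF \<mu>, of k] prob_vec_eq_1_other[OF \<nu>, of l]
        transport_entry_nonneg[OF Z] transport_entry_le_row[OF Z] transport_entry_le_col[OF Z]
      by (metis order_antisym)
    have "1 = (\<Sum>l\<in>UNIV. Z $ a $ l)" using Z \<mu> by (simp add: transport_polytope_def)
    also have "\<dots> = Z $ a $ b"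
      using off by (simp add: sum.remove[of UNIV b] sum.neutral)
    finally show ?thesis using off by (auto simp: vec_eq_iff unit_mat_def)
  qed
  moreover have "transport_polytope \<mu> \<nu> \<noteq> {}"
    using product_coupling_in_transport_polytope[OF \<mu>(1) \<nu>(1)] by blast
  ultimately show ?thesis by blast
qed

lemma convex_transport_polytope: "convex (transport_polytope \<mu> \<nu>)"
  by (auto simp: convex_def transport_polytope_def sum.distrib sum_distrib_left[symmetric]
      distrib_right[symmetric])

lemma compact_transport_polytope:
  assumes "prob_vec \<mu>" shows "compact (transport_polytope \<mu> \<nu>)"
proof -
  have "closed (transport_polytope \<mu> \<nu>)"
    unfolding transport_polytope_def
    by (intro closed_Collect_conj closed_Collect_all closed_Collect_le closed_Collect_eq
        continuous_intros)
  moreover have "norm X \<le> 1" if X: "X \<in> transport_polytope \<mu> \<nu>" for X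
  proof -
    have "norm X \<le> (\<Sum>a\<in>UNIV. norm (X $ a))" unfolding norm_vec_def
      by (rule L2_set_le_sum) simp
    also have "\<dots> \<le> (\<Sum>a\<in>UNIV. \<Sum>b\<in>UNIV. \<bar>X $ a $ b\<bar>)"
      by (intro sum_mono) (simp add: norm_le_l1_cart)
    also have "\<dots> = (\<Sum>a\<in>UNIV. \<mu> $ a)"
      using X by (simp add: transport_polytope_def)
    finally show ?thesis using assms by (simp add: prob_vec_def)
  qed
  then have "bounded (transport_polytope \<mu> \<nu>)" by (auto simp: bounded_iff)
  ultimately show ?thesis by (simp add: compact_eq_bounded_closed)
qed

lemma ex1_minimizer_strict_midpoint_convex:
  fixes g :: "'a::real_normed_vector \<Rightarrow> real"
  assumes "compact S" "convex S" "S \<noteq> {}" "continuous_on S g"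
    and strict: "\<And>x y. x \<in> S \<Longrightarrow> y \<in> S \<Longrightarrow> x \<noteq> y \<Longrightarrow> g (midpoint x y) < (g x + g y) / 2"
  shows "\<exists>!x. x \<in> S \<and> (\<forall>y\<in>S. g x \<le> g y)"
proof -
  obtain x where x: "x \<in> S" "\<forall>y\<in>S. g x \<le> g y"
    using continuous_attains_inf[OF assms(1,3,4)] by blast
  moreover have "z = x" if z: "z \<in> S" "\<forall>y\<in>S. g z \<le> g y" for z
  proof (rule ccontr)
    assume "z \<noteq> x"
    then have "g (midpoint z x) < (g z + g x) / 2" using strict x z by blast
    moreover have "midpoint z x \<in> S"
      using closed_segment_subset[OF z(1) x(1) assms(2)] midpoint_in_closed_segment by blast
    ultimately show False using x z by fastforce
  qed
  ultimately show ?thesis by blast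
qed

lemma strictly_convex_on_midpoint:
  assumes "strictly_convex_on S f" "x \<in> S" "y \<in> S" "x \<noteq> y"
  shows "f (midpoint x y) < (f x + f y) / 2"
proof -
  have "\<forall>t. x \<noteq> y \<and> 0 < t \<and> t < 1 \<longrightarrow> f ((1 - t) * x + t * y) < (1 - t) * f x + t * f y"
    using assms(1-3) unfolding strictly_convex_on_def by blast
  then have "f ((1 - 1/2) * x + 1/2 * y) < (1 - 1/2) * f x + 1/2 * f y"
    using assms(4) by (auto dest: spec[of _ "1/2"])
  moreover have "midpoint x y = (1 - 1/2) * x + 1/2 * y" by (simp add: midpoint_def)
  ultimately show ?thesis by simp
qed

definition sum_entries :: "(real \<Rightarrow> real) \<Rightarrow> real ^ 'n ^ 'm \<Rightarrow> real" where
  "sum_entries f X = (\<Sum>a\<in>UNIV. \<Sum>b\<in>UNIV. f (X $ a $ b))"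

lemma sum_entries_midpoint_less:
  assumes f: "strictly_convex_on D f"
    and XD: "\<And>a b. X $ a $ b \<in> D" and YD: "\<And>a b. Y $ a $ b \<in> D" and "X \<noteq> Y"
  shows "sum_entries f (midpoint X Y) < (sum_entries f X + sum_entries f Y) / 2"
proof -
  have entry_le: "f (midpoint X Y $ a $ b) \<le> (f (X $ a $ b) + f (Y $ a $ b)) / 2" for a b
    using strictly_convex_on_midpoint[OF f XD YD, of a b a b]
    by (cases "X $ a $ b = Y $ a $ b") (auto simp: midpoint_def)
  obtain a b where "X $ a $ b \<noteq> Y $ a $ b" using \<open>X \<noteq> Y\<close> by (metis vec_eq_iff)
  then have "f (midpoint X Y $ a $ b) < (f (X $ a $ b) + f (Y $ a $ b)) / 2"
    using strictly_convex_on_midpoint[OF f XD YD] by (simp add: midpoint_def)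
  then have "(\<Sum>(a, b)\<in>UNIV. f (midpoint X Y $ a $ b))
      < (\<Sum>(a, b)\<in>UNIV. (f (X $ a $ b) + f (Y $ a $ b)) / 2)"
    using entry_le by (intro sum_strict_mono_ex1) auto
  moreover have flat: "sum_entries f Z = (\<Sum>(a, b)\<in>UNIV. f (Z $ a $ b))" for Z
    by (simp add: sum_entries_def sum.cartesian_product)
  ultimately show ?thesis
    unfolding flat by (simp add: sum.distrib split_beta flip: sum_divide_distrib)
qed

lemma phi_eq_ereal_phir:
  assumes "proper_fun \<phi>" "x \<in> edom \<phi>"
  shows "\<phi> x = ereal (phir \<phi> x)"
  using assms by (cases "\<phi> x") (auto simp: proper_fun_def edom_def phir_def)

lemma reg_obj_eq_ereal:
  assumes "proper_fun \<phi>" "\<And>a b. X $ a $ b \<in> edom \<phi>"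
  shows "reg_obj \<gamma> \<phi> C X = ereal (frob C X + \<gamma> * sum_entries (phir \<phi>) X)"
  using phi_eq_ereal_phir[OF assms(1)] assms(2)
  by (simp add: reg_obj_def phi_mat_def sum_entries_def sum_ereal)

lemma frob_midpoint: "frob C (midpoint X Y) = (frob C X + frob C Y) / 2"
  by (simp add: frob_def midpoint_def sum.distrib algebra_simps flip: sum_divide_distrib)

lemma frob_add_unit_mat: "frob (C + lam *\<^sub>R unit_mat i j) Y = frob C Y + lam * Y $ i $ j"
proof -
  have "(C + lam *\<^sub>R unit_mat i j) $ a $ b * Y $ a $ b
      = C $ a $ b * Y $ a $ b + (if b = j then if a = i then lam * Y $ a $ b else 0 else 0)" for a b
    by (simp add: unit_mat_def distrib_right)
  then show ?thesis by (simp add: frob_def sum.distrib)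
qed

definition reg_minimizer ::
    "real ^ 'n \<Rightarrow> real ^ 'n \<Rightarrow> real \<Rightarrow> (real \<Rightarrow> ereal) \<Rightarrow> real ^ 'n ^ 'n \<Rightarrow>
      real ^ 'n ^ 'n \<Rightarrow> bool"
  where "reg_minimizer \<mu> \<nu> \<gamma> \<phi> C X \<longleftrightarrow> X \<in> transport_polytope \<mu> \<nu> \<and>
    (\<forall>Y\<in>transport_polytope \<mu> \<nu>. reg_obj \<gamma> \<phi> C X \<le> reg_obj \<gamma> \<phi> C Y)"

lemma regOT_eq_The: "regOT \<mu> \<nu> \<gamma> \<phi> C = (THE X. reg_minimizer \<mu> \<nu> \<gamma> \<phi> C X)"
  by (simp add: regOT_def reg_minimizer_def)

lemma reg_minimizer_raise_cost_at_zero: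
  assumes X: "reg_minimizer \<mu> \<nu> \<gamma> \<phi> C X" and "X $ i $ j = 0" "0 \<le> lam"
  shows "reg_minimizer \<mu> \<nu> \<gamma> \<phi> (C + lam *\<^sub>R unit_mat i j) X"
  unfolding reg_minimizer_def
proof (intro conjI ballI)
  show "X \<in> transport_polytope \<mu> \<nu>" using X by (simp add: reg_minimizer_def)
  have shift: "reg_obj \<gamma> \<phi> (C + lam *\<^sub>R unit_mat i j) Z
      = reg_obj \<gamma> \<phi> C Z + ereal (lam * Z $ i $ j)" for Z
    by (simp add: reg_obj_def frob_add_unit_mat ac_simps flip: plus_ereal.simps(1))
  fix Y assume Y: "Y \<in> transport_polytope \<mu> \<nu>"
  have "reg_obj \<gamma> \<phi> (C + lam *\<^sub>R unit_mat i j) X = reg_obj \<gamma> \<phi> C X"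
    using shift \<open>X $ i $ j = 0\<close> by simp
  also have "\<dots> \<le> reg_obj \<gamma> \<phi> C Y" using X Y by (simp add: reg_minimizer_def)
  also have "\<dots> \<le> reg_obj \<gamma> \<phi> C Y + ereal (lam * Y $ i $ j)"
    using transport_entry_nonneg[OF Y, of i j] \<open>0 \<le> lam\<close> by (simp add: add_increasing2)
  also have "\<dots> = reg_obj \<gamma> \<phi> (C + lam *\<^sub>R unit_mat i j) Y" using shift by simp
  finally show "reg_obj \<gamma> \<phi> (C + lam *\<^sub>R unit_mat i j) X
      \<le> reg_obj \<gamma> \<phi> (C + lam *\<^sub>R unit_mat i j) Y" .
qed

lemma ex1_reg_minimizer_interior:
  assumes \<mu>: "prob_vec \<mu>" and \<nu>: "prob_vec \<nu>" and "\<gamma> > 0" and B: "bregman_assumption \<phi>"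
    and entries: "\<And>X a b. X \<in> transport_polytope \<mu> \<nu> \<Longrightarrow> X $ a $ b \<in> interior (edom \<phi>)"
  shows "\<exists>!X. reg_minimizer \<mu> \<nu> \<gamma> \<phi> C X"
proof -
  let ?P = "transport_polytope \<mu> \<nu>"
  let ?D = "interior (edom \<phi>)"
  define g where "g X = frob C X + \<gamma> * sum_entries (phir \<phi>) X" for X
  have "proper_fun \<phi>" using B by (simp add: bregman_assumption_def legendre_type_def)
  then have reg: "reg_obj \<gamma> \<phi> C X = ereal (g X)" if "X \<in> ?P" for X
    unfolding g_def by (rule reg_obj_eq_ereal) (use entries[OF that] interior_subset in blast)
  have "continuous_on ?D (phir \<phi>)"
    using B by (auto simp: bregman_assumption_def differentiable_imp_continuous_within
        intro!: continuous_at_imp_continuous_on)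
  then have "continuous_on ?P (\<lambda>X. phir \<phi> (X $ a $ b))" for a b
    by (rule continuous_on_compose2) (use entries in \<open>auto intro!: continuous_intros\<close>)
  then have cont: "continuous_on ?P g"
    unfolding g_def frob_def sum_entries_def by (intro continuous_intros)
  have strict: "g (midpoint X Y) < (g X + g Y) / 2" if "X \<in> ?P" "Y \<in> ?P" "X \<noteq> Y" for X Y
  proof -
    have "strictly_convex_on ?D (phir \<phi>)"
      using B by (simp add: bregman_assumption_def legendre_type_def)
    from sum_entries_midpoint_less[OF this entries[OF that(1)] entries[OF that(2)] that(3)]
    have "\<gamma> * sum_entries (phir \<phi>) (midpoint X Y)
        < \<gamma> * ((sum_entries (phir \<phi>) X + sum_entries (phir \<phi>) Y) / 2)"
      using \<open>\<gamma> > 0\<close> by (rule mult_strict_left_mono)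
    then show ?thesis by (simp add: g_def frob_midpoint field_simps)
  qed
  have "?P \<noteq> {}" using product_coupling_in_transport_polytope[OF \<mu> \<nu>] by blast
  from ex1_minimizer_strict_midpoint_convex[OF compact_transport_polytope[OF \<mu>]
      convex_transport_polytope this cont strict]
  show ?thesis by (simp add: reg_minimizer_def reg cong: conj_cong)
qed

lemma ex1_reg_minimizer:
  assumes \<mu>: "prob_vec \<mu>" and \<nu>: "prob_vec \<nu>" and "\<gamma> > 0" and B: "bregman_assumption \<phi>"
    and L: "\<exists>L::real. (deriv (phir \<phi>) \<longlongrightarrow> L) (at_right 0)"
  shows "\<exists>!X. reg_minimizer \<mu> \<nu> \<gamma> \<phi> C X"
proof (cases "\<exists>a b. \<mu> $ a = 1 \<and> \<nu> $ b = 1")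
  \<comment> \<open>a point-mass polytope is the only case where an entry can reach 1, possibly outside dom \<open>\<phi>\<close>\<close>
  case True
  then obtain a b where "\<mu> $ a = 1" "\<nu> $ b = 1" by blast
  then have P: "transport_polytope \<mu> \<nu> = {unit_mat a b}"
    using transport_polytope_point_mass \<mu> \<nu> by blast
  show ?thesis
    unfolding reg_minimizer_def P by (intro ex1I[of _ "unit_mat a b"]) simp_all
next
  case False
  have "X $ a $ b \<in> interior (edom \<phi>)" if X: "X \<in> transport_polytope \<mu> \<nu>" for X a b
  proof -
    have "0 \<le> X $ a $ b" using transport_entry_nonneg[OF X] .
    moreover have "X $ a $ b \<le> \<mu> $ a" "\<mu> $ a \<le> 1" "X $ a $ b \<le> \<nu> $ b" "\<nu> $ b \<le> 1"
      using transport_entry_le_row[OF X] prob_vec_le_1[OF \<mu>]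
        transport_entry_le_col[OF X] prob_vec_le_1[OF \<nu>] by auto
    then have "X $ a $ b < 1" using False by (smt (verit))
    moreover have "0 \<in> interior (edom \<phi>)" using zero_in_interior_edom[OF B L] .
    moreover have "{0<..<1} \<subseteq> interior (edom \<phi>)" using B by (simp add: bregman_assumption_def)
    ultimately show ?thesis by (cases "X $ a $ b = 0") auto
  qed
  then show ?thesis using ex1_reg_minimizer_interior[OF \<mu> \<nu> \<open>\<gamma> > 0\<close> B] by blast
qed

theorem proposition5:
  fixes \<mu> \<nu> :: "real ^ 'n" and \<gamma> :: real and \<phi> :: "real \<Rightarrow> ereal"
    and Chat :: "real ^ 'n ^ 'n" and i j :: 'n
  assumes "prob_vec \<mu>" and "prob_vec \<nu>" and "\<gamma> > 0"
    and "bregman_assumption \<phi>"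
    and "\<exists>L::real. (deriv (phir \<phi>) \<longlongrightarrow> L) (at_right 0)"
    and "regOT \<mu> \<nu> \<gamma> \<phi> Chat $ i $ j = 0"
  shows "\<forall>lam>0. regOT \<mu> \<nu> \<gamma> \<phi> (Chat + lam *\<^sub>R unit_mat i j) = regOT \<mu> \<nu> \<gamma> \<phi> Chat"
proof (intro allI impI)
  fix lam :: real assume "lam > 0"
  have unique: "\<exists>!X. reg_minimizer \<mu> \<nu> \<gamma> \<phi> C X" for C
    using ex1_reg_minimizer[OF assms(1-5)] .
  have "reg_minimizer \<mu> \<nu> \<gamma> \<phi> Chat (regOT \<mu> \<nu> \<gamma> \<phi> Chat)"
    unfolding regOT_eq_The by (rule theI'[OF unique])
  then have "reg_minimizer \<mu> \<nu> \<gamma> \<phi> (Chat + lam *\<^sub>R unit_mat i j) (regOT \<mu> \<nu> \<gamma> \<phi> Chat)"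
    by (rule reg_minimizer_raise_cost_at_zero) (use assms(6) \<open>lam > 0\<close> in auto)
  then show "regOT \<mu> \<nu> \<gamma> \<phi> (Chat + lam *\<^sub>R unit_mat i j) = regOT \<mu> \<nu> \<gamma> \<phi> Chat"
    unfolding regOT_eq_The[of _ _ _ _ "Chat + lam *\<^sub>R unit_mat i j"]
    by (rule the1_equality[OF unique])
qed

end
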